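(* Let $A$ be a prime ring which satisfies the ascending chain condition on prime ideals (every ascending chain of prime ideals of $A$ stabilizes). Then $A$ is Hopfian.
   Context: A ring $A$ is \emph{Hopfian} if $A$ is not isomorphic (as a ring) to $A/J$ for any nonzero two-sided ideal $J \triangleleft A$. *)

theory Defs
  imports "HOL-Algebra.Algebra"
begin

definition nc_prime_ideal :: "'a set \<Rightarrow> ('a, 'b) ring_scheme \<Rightarrow> bool" where
  "nc_prime_ideal P R \<longleftrightarrow> ideal P R \<and> P \<noteq> carrier R \<and>
     (\<forall>I J. ideal I R \<longrightarrow> ideal J R \<longrightarrow> ideal_prod R I J \<subseteq> P \<longrightarrow> I \<subseteq> P \<or> J \<subseteq> P)"

definition prime_ring :: "('a, 'b) ring_scheme \<Rightarrow> bool" where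
  "prime_ring R \<longleftrightarrow> ring R \<and> nc_prime_ideal {\<zero>\<^bsub>R\<^esub>} R"

definition acc_prime_ideals :: "('a, 'b) ring_scheme \<Rightarrow> bool" where
  "acc_prime_ideals R \<longleftrightarrow>
     (\<forall>P :: nat \<Rightarrow> 'a set. (\<forall>n. nc_prime_ideal (P n) R) \<longrightarrow> (\<forall>n. P n \<subseteq> P (Suc n)) \<longrightarrow>
        (\<exists>N. \<forall>n\<ge>N. P n = P N))"

definition hopfian :: "('a, 'b) ring_scheme \<Rightarrow> bool" where
  "hopfian R \<longleftrightarrow> (\<forall>J. ideal J R \<longrightarrow> J \<noteq> {\<zero>\<^bsub>R\<^esub>} \<longrightarrow> \<not> (R \<simeq> R Quot J))"

end

theory Submission
  imports Defs
begin

text \<open>Composing an isomorphism \<open>A \<cong> A/J\<close> with the projection \<open>A \<rightarrow> A/J\<close> gives a surjective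
  endomorphism \<open>f\<close> of \<open>A\<close> with kernel \<open>J \<noteq> 0\<close>. Since \<open>A\<close> is prime and \<open>f\<close> is surjective,
  every kernel \<open>ker f\<^sup>n\<close> is a prime ideal, being the preimage of the prime ideal \<open>0\<close> under
  the surjection \<open>f\<^sup>n\<close>. These kernels form an ascending chain, which must stabilize at some
  \<open>N\<close>; but a nonzero \<open>x \<in> ker f\<close> can be written as \<open>f\<^sup>N y\<close>, and then \<open>y \<in> ker f\<^sup>N\<^sup>+\<^sup>1 = ker f\<^sup>N\<close>
  forces \<open>x = 0\<close>.\<close>

lemma (in ring_hom_ring) ideal_image_surj:
  assumes surj: "h ` carrier R = carrier S" and I: "ideal I R"
  shows "ideal (h ` I) S"
proof -
  interpret I: ideal I R by fact
  have I_carr: "I \<subseteq> carrier R" using I.Icarr by blast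
  show ?thesis
  proof (rule idealI[OF S.ring_axioms])
    show "subgroup (h ` I) (add_monoid S)"
    proof (rule S.add.subgroupI)
      show "h ` I \<subseteq> carrier S" using I_carr by auto
      show "h ` I \<noteq> {}" using I.zero_closed by blast
    next
      fix a assume "a \<in> h ` I"
      then obtain x where x: "x \<in> I" "a = h x" by blast
      then have "h (\<ominus> x) = \<ominus>\<^bsub>S\<^esub> a" using I_carr by auto
      moreover have "\<ominus> x \<in> I" using x by (simp add: I.a_inv_closed)
      ultimately show "\<ominus>\<^bsub>S\<^esub> a \<in> h ` I" by (metis image_eqI)
    next
      fix a b assume "a \<in> h ` I" "b \<in> h ` I"
      then obtain x y where x: "x \<in> I" "a = h x" "y \<in> I" "b = h y" by blast
      then have "h (x \<oplus> y) = a \<oplus>\<^bsub>S\<^esub> b" using I_carr by auto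
      moreover have "x \<oplus> y \<in> I" using x by (simp add: I.a_closed)
      ultimately show "a \<oplus>\<^bsub>S\<^esub> b \<in> h ` I" by (metis image_eqI)
    qed
  next
    fix a z assume "a \<in> h ` I" "z \<in> carrier S"
    then obtain x y where x: "x \<in> I" "a = h x" "y \<in> carrier R" "z = h y"
      using surj by blast
    then have "h (y \<otimes> x) = z \<otimes>\<^bsub>S\<^esub> a" "h (x \<otimes> y) = a \<otimes>\<^bsub>S\<^esub> z" using I_carr by auto
    moreover have "y \<otimes> x \<in> I" "x \<otimes> y \<in> I" using x by (auto simp: I.I_l_closed I.I_r_closed)
    ultimately show "z \<otimes>\<^bsub>S\<^esub> a \<in> h ` I" "a \<otimes>\<^bsub>S\<^esub> z \<in> h ` I" by (metis image_eqI)+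
  qed
qed

lemma (in ring_hom_ring) ideal_prod_image_subset:
  assumes I: "ideal I R" and J: "ideal J R"
  shows "ideal_prod S (h ` I) (h ` J) \<subseteq> h ` ideal_prod R I J"
proof
  have IJ_carr: "I \<subseteq> carrier R" "J \<subseteq> carrier R"
    using ideal.Icarr[OF I] ideal.Icarr[OF J] by blast+
  fix s assume "s \<in> ideal_prod S (h ` I) (h ` J)"
  then show "s \<in> h ` ideal_prod R I J"
  proof (induction s rule: ideal_prod.induct)
    case (prod i j)
    then obtain x y where "x \<in> I" "i = h x" "y \<in> J" "j = h y" by blast
    moreover have "x \<in> carrier R" "y \<in> carrier R" using calculation IJ_carr by blast+
    ultimately have "h (x \<otimes> y) = i \<otimes>\<^bsub>S\<^esub> j" by simp
    moreover have "x \<otimes> y \<in> ideal_prod R I J" using \<open>x \<in> I\<close> \<open>y \<in> J\<close> by (rule ideal_prod.prod)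
    ultimately show ?case by (metis image_eqI)
  next
    case (sum s t)
    then obtain x y where "x \<in> ideal_prod R I J" "s = h x" "y \<in> ideal_prod R I J" "t = h y"
      by blast
    moreover have "x \<in> carrier R" "y \<in> carrier R"
      using calculation R.ideal_prod_in_carrier[OF I J] by blast+
    ultimately have "h (x \<oplus> y) = s \<oplus>\<^bsub>S\<^esub> t" by simp
    moreover have "x \<oplus> y \<in> ideal_prod R I J" using \<open>x \<in> ideal_prod R I J\<close> \<open>y \<in> ideal_prod R I J\<close>
      by (rule ideal_prod.sum)
    ultimately show ?case by (metis image_eqI)
  qed
qed

lemma (in ring_hom_ring) nc_prime_ideal_vimage_surj:
  assumes surj: "h ` carrier R = carrier S" and P: "nc_prime_ideal P S"
  shows "nc_prime_ideal {r \<in> carrier R. h r \<in> P} R"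
proof -
  let ?Q = "{r \<in> carrier R. h r \<in> P}"
  have P_ideal: "ideal P S" and P_proper: "P \<noteq> carrier S"
    and P_prime: "\<And>I J. \<lbrakk>ideal I S; ideal J S; ideal_prod S I J \<subseteq> P\<rbrakk> \<Longrightarrow> I \<subseteq> P \<or> J \<subseteq> P"
    using P unfolding nc_prime_ideal_def by auto
  have "\<one> \<notin> ?Q"
    using P_proper ideal.one_imp_carrier[OF P_ideal] by auto
  then have Q_proper: "?Q \<noteq> carrier R" using R.one_closed by blast
  have Q_prime: "I \<subseteq> ?Q \<or> J \<subseteq> ?Q"
    if I: "ideal I R" and J: "ideal J R" and IJ: "ideal_prod R I J \<subseteq> ?Q" for I J
  proof -
    have "ideal_prod S (h ` I) (h ` J) \<subseteq> P"
      using ideal_prod_image_subset[OF I J] IJ by blast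
    then have "h ` I \<subseteq> P \<or> h ` J \<subseteq> P"
      by (rule P_prime[OF ideal_image_surj[OF surj I] ideal_image_surj[OF surj J]])
    moreover have "I \<subseteq> carrier R" "J \<subseteq> carrier R"
      using ideal.Icarr[OF I] ideal.Icarr[OF J] by blast+
    ultimately show ?thesis by blast
  qed
  show ?thesis
    unfolding nc_prime_ideal_def using ideal_vimage[OF P_ideal] Q_proper Q_prime by blast
qed

lemma ring_hom_funpow:
  assumes "ring R" and f: "f \<in> ring_hom R R"
  shows "f ^^ n \<in> ring_hom R R"
proof (induction n)
  case 0
  then show ?case using id_ring_hom by (simp add: id_def)
next
  case (Suc n)
  then show ?case using ring_hom_trans[OF Suc f] by (simp add: comp_def)
qed

lemma funpow_image_eq:
  assumes "f ` A = A"
  shows "(f ^^ n) ` A = A"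
proof (induction n)
  case (Suc n)
  have "(f ^^ Suc n) ` A = f ` (f ^^ n) ` A" by (simp add: image_comp)
  with Suc assms show ?case by simp
qed simp

lemma surj_endomorphism_kernel_trivial:
  assumes prime: "prime_ring R" and acc: "acc_prime_ideals R"
    and f: "f \<in> ring_hom R R" and surj: "f ` carrier R = carrier R"
  shows "a_kernel R R f = {\<zero>\<^bsub>R\<^esub>}"
proof -
  have R: "ring R" and zero_prime: "nc_prime_ideal {\<zero>\<^bsub>R\<^esub>} R"
    using prime by (auto simp: prime_ring_def)
  interpret ring R by fact
  define K where "K n = {r \<in> carrier R. (f ^^ n) r \<in> {\<zero>\<^bsub>R\<^esub>}}" for n
  have f_zero: "f \<zero>\<^bsub>R\<^esub> = \<zero>\<^bsub>R\<^esub>" using ring_hom_zero[OF f R R] .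
  have "nc_prime_ideal (K n) R" for n
    unfolding K_def
    using ring_hom_ring.nc_prime_ideal_vimage_surj[OF ring_hom_ringI2[OF R R ring_hom_funpow[OF R f]]
        funpow_image_eq[OF surj] zero_prime] .
  moreover have "K n \<subseteq> K (Suc n)" for n
    using f_zero by (auto simp: K_def)
  ultimately obtain N where N: "\<forall>n\<ge>N. K n = K N"
    using acc unfolding acc_prime_ideals_def by blast
  have "x = \<zero>\<^bsub>R\<^esub>" if x: "x \<in> carrier R" "f x = \<zero>\<^bsub>R\<^esub>" for x
  proof -
    obtain y where y: "y \<in> carrier R" "x = (f ^^ N) y"
      using x funpow_image_eq[OF surj, of N] by blast
    then have "y \<in> K (Suc N)" using x by (simp add: K_def)
    then have "y \<in> K N" using N by (metis le_SucI order_refl)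
    then show ?thesis using y by (simp add: K_def)
  qed
  then show ?thesis
    using f_zero by (auto simp: a_kernel_def')
qed

lemma (in ideal) quotient_iso_endomorphism:
  assumes "R \<simeq> R Quot I"
  obtains f where "f \<in> ring_hom R R" "f ` carrier R = carrier R" "a_kernel R R f = I"
proof -
  obtain h where h: "h \<in> ring_iso R (R Quot I)" using assms unfolding is_ring_iso_def by blast
  have h_hom: "h \<in> ring_hom R (R Quot I)" and h_bij: "bij_betw h (carrier R) (carrier (R Quot I))"
    using h by (auto simp: ring_iso_def)
  have h_inv: "inv_into (carrier R) h \<in> ring_hom (R Quot I) R"
    using ring_iso_set_sym[OF ring_axioms h] by (simp add: ring_iso_def)
  define f where "f = inv_into (carrier R) h \<circ> (+>) I"
  have proj_surj: "(+>) I ` carrier R = carrier (R Quot I)"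
    by (auto simp: FactRing_def A_RCOSETS_def')
  have h_zero: "h \<zero> = I"
    using ring_hom_zero[OF h_hom ring_axioms quotient_is_ring] by (simp add: FactRing_def)
  have f_hom: "f \<in> ring_hom R R"
    unfolding f_def by (rule ring_hom_trans[OF rcos_ring_hom h_inv])
  have f_surj: "f ` carrier R = carrier R"
    unfolding f_def image_comp[symmetric] proj_surj
    using bij_betw_inv_into[OF h_bij] by (simp add: bij_betw_def)
  have kernel_iff: "f x = \<zero> \<longleftrightarrow> x \<in> I" if x: "x \<in> carrier R" for x
  proof -
    have "I +> x \<in> carrier (R Quot I)" using proj_surj x by blast
    then have "f x = \<zero> \<longleftrightarrow> I +> x = h \<zero>"
      unfolding f_def using h_bij
      by (metis bij_betw_def bij_betw_inv_into_left comp_apply f_inv_into_f zero_closed)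
    then show ?thesis
      using h_zero x rcos_const_imp_mem a_rcos_const by auto
  qed
  have "a_kernel R R f = I"
    unfolding a_kernel_def' using kernel_iff Icarr by blast
  with f_hom f_surj show thesis by (rule that)
qed

theorem mainTheorem2:
  fixes A :: "('a, 'b) ring_scheme"
  assumes "prime_ring A"
    and "acc_prime_ideals A"
  shows "hopfian A"
  unfolding hopfian_def
proof (intro allI impI notI)
  fix J assume J: "ideal J A" and J_nonzero: "J \<noteq> {\<zero>\<^bsub>A\<^esub>}" and iso: "A \<simeq> A Quot J"
  obtain f where "f \<in> ring_hom A A" "f ` carrier A = carrier A" "a_kernel A A f = J"
    using ideal.quotient_iso_endomorphism[OF J iso] .
  then have "J = {\<zero>\<^bsub>A\<^esub>}"
    using surj_endomorphism_kernel_trivial[OF assms] by blast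
  then show False using J_nonzero by contradiction
qed

end
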